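(* Let $X$ be a real Banach space and $\varphi\colon X\to(-\infty,\infty]$ a closed (lower semicontinuous), convex, proper function. Then $\varphi$ is an Orlicz function on $X$ if and only if its convex conjugate $\varphi^*\colon X^*\to(-\infty,\infty]$, $\varphi^*(x')=\sup_{x\in X}(\langle x',x\rangle-\varphi(x))$, is an Orlicz function on $X^*$.
   Context: An Orlicz function on a Banach space $Z$ is an even, convex, lower semicontinuous, proper function $\psi\colon Z\to(-\infty,\infty]$ such that $\lim_{z\to 0}\psi(z)=0$ and $\lim_{\|z\|\to\infty}\psi(z)=+\infty$ (such a function is automatically nonnegative). *)

theory Defs
  imports "HOL-Analysis.Analysis"
begin

text \<open>Extended-real valued functions \<open>Z \<Rightarrow> (-\<infinity>,\<infinity>]\<close> are modelled as \<open>Z \<Rightarrow> ereal\<close>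
  together with the requirement that \<open>-\<infinity>\<close> is never attained (part of properness).\<close>

definition ereal_convex :: "('a::real_vector \<Rightarrow> ereal) \<Rightarrow> bool" where
  "ereal_convex f \<longleftrightarrow>
     (\<forall>x y. \<forall>t::real. 0 < t \<and> t < 1 \<longrightarrow>
        f (t *\<^sub>R x + (1 - t) *\<^sub>R y) \<le> ereal t * f x + ereal (1 - t) * f y)"

definition ereal_lsc :: "('a::topological_space \<Rightarrow> ereal) \<Rightarrow> bool" where
  "ereal_lsc f \<longleftrightarrow> (\<forall>c. closed {x. f x \<le> c})"

definition ereal_proper :: "('a \<Rightarrow> ereal) \<Rightarrow> bool" where
  "ereal_proper f \<longleftrightarrow> (\<forall>x. f x \<noteq> -\<infinity>) \<and> (\<exists>x. f x \<noteq> \<infinity>)"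

definition ereal_even :: "('a::real_vector \<Rightarrow> ereal) \<Rightarrow> bool" where
  "ereal_even f \<longleftrightarrow> (\<forall>x. f (- x) = f x)"

definition orlicz_function :: "('a::banach \<Rightarrow> ereal) \<Rightarrow> bool" where
  "orlicz_function \<psi> \<longleftrightarrow>
     ereal_even \<psi> \<and> ereal_convex \<psi> \<and> ereal_lsc \<psi> \<and> ereal_proper \<psi> \<and>
     (\<psi> \<longlongrightarrow> 0) (at 0) \<and> (\<psi> \<longlongrightarrow> \<infinity>) at_infinity"

definition convex_conjugate :: "('a::real_normed_vector \<Rightarrow> ereal) \<Rightarrow> ('a \<Rightarrow>\<^sub>L real) \<Rightarrow> ereal" where
  "convex_conjugate \<phi> x' = (SUP x. ereal (blinfun_apply x' x) - \<phi> x)"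

end

theory Submission
  imports Defs
begin

text \<open>The Fenchel-Moreau theorem \<open>\<phi>\<^sup>*\<^sup>* = \<phi>\<close>, proved from a Hahn-Banach separation of the
  closed convex epigraph, makes both directions instances of one statement about the conjugate
  \<open>g v = sup\<^sub>u (\<langle>u, v\<rangle> - f u)\<close> of an Orlicz function \<open>f\<close>, taken over \<open>X\<close> (\<open>g = \<phi>\<^sup>*\<close>) or over
  \<open>X\<^sup>*\<close> (\<open>g = \<phi>\<^sup>*\<^sup>* = \<phi>\<close>). Convexity and \<open>f 0 = 0\<close> turn
  \<open>f \<rightarrow> \<infinity>\<close> into the coercivity bound \<open>f u \<ge> \<parallel>u\<parallel> / R\<close> for \<open>\<parallel>u\<parallel> \<ge> R\<close>, whence \<open>g v \<le> R \<parallel>v\<parallel>\<close>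
  near \<open>0\<close>; and \<open>f < 1\<close> on a ball of radius \<open>d\<close>, tested against a half-norming \<open>u\<close>, gives
  \<open>g v \<ge> d \<parallel>v\<parallel> / 4 - 1\<close>, so \<open>g \<rightarrow> \<infinity>\<close>. Convexity and lower semicontinuity of \<open>\<phi>\<^sup>*\<close> are
  automatic, those of \<open>\<phi>\<close> are assumed. On the zero space both sides hold trivially.\<close>

section \<open>Hahn-Banach extension dominated by a sublinear functional\<close>

definition sublinear :: "('a::real_vector \<Rightarrow> real) \<Rightarrow> bool" where
  "sublinear p \<longleftrightarrow> (\<forall>x y. p (x + y) \<le> p x + p y) \<and> (\<forall>c x. 0 < c \<longrightarrow> p (c *\<^sub>R x) \<le> c * p x)"

lemma sublinear_add: "sublinear p \<Longrightarrow> p (x + y) \<le> p x + p y"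
  unfolding sublinear_def by blast

lemma sublinear_scaleR:
  assumes "sublinear p" and "0 < c"
  shows "p (c *\<^sub>R x) = c * p x"
proof -
  have le: "p (d *\<^sub>R y) \<le> d * p y" if "0 < d" for d y
    using assms(1) that unfolding sublinear_def by blast
  have "p x = p (inverse c *\<^sub>R (c *\<^sub>R x))" using assms(2) by simp
  also have "\<dots> \<le> inverse c * p (c *\<^sub>R x)" by (rule le) (use assms(2) in simp)
  finally have "c * p x \<le> p (c *\<^sub>R x)" using assms(2) by (simp add: field_simps)
  with le[OF assms(2), of x] show ?thesis by linarith
qed

lemma sublinear_zero: "sublinear p \<Longrightarrow> p 0 = 0"
  using sublinear_scaleR[of p 2 0] by simp

definition dominated_graph :: "('a::real_vector \<Rightarrow> real) \<Rightarrow> ('a \<times> real) set \<Rightarrow> bool" where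
  "dominated_graph p G \<longleftrightarrow> subspace G \<and> (\<forall>(x, b)\<in>G. b \<le> p x)"

lemma dominated_graph_le: "dominated_graph p G \<Longrightarrow> (x, b) \<in> G \<Longrightarrow> b \<le> p x"
  unfolding dominated_graph_def by blast

text \<open>Single-valuedness need not be part of the definition: it follows from domination, since
  \<open>(0, b - b')\<close> lies in the graph and \<open>p 0 = 0\<close>.\<close>

lemma dominated_graph_unique:
  assumes p: "sublinear p" and G: "dominated_graph p G" and "(x, b) \<in> G" "(x, b') \<in> G"
  shows "b = b'"
proof -
  have "(0, b - b') \<in> G" "(0, b' - b) \<in> G"
    using subspace_diff[of G "(x, b)" "(x, b')"] subspace_diff[of G "(x, b')" "(x, b)"] assms
    unfolding dominated_graph_def by auto
  then have "b - b' \<le> 0" "b' - b \<le> 0"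
    using dominated_graph_le[OF G] sublinear_zero[OF p] by fastforce+
  then show ?thesis by simp
qed

lemma dominated_graph_chain_Union:
  assumes C: "C \<in> chains {G. dominated_graph p G}" and "C \<noteq> {}"
  shows "dominated_graph p (\<Union>C)"
  unfolding dominated_graph_def subspace_def
proof (intro conjI ballI allI)
  have dom: "\<And>G. G \<in> C \<Longrightarrow> dominated_graph p G"
    and chain: "\<And>G H. G \<in> C \<Longrightarrow> H \<in> C \<Longrightarrow> G \<subseteq> H \<or> H \<subseteq> G"
    using C unfolding chains_def chain_subset_def by auto
  then have sub: "\<And>G. G \<in> C \<Longrightarrow> subspace G" unfolding dominated_graph_def by blast
  obtain G where "G \<in> C" using \<open>C \<noteq> {}\<close> by blast
  then show "0 \<in> \<Union>C" using sub subspace_0 by blast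
  show "g + h \<in> \<Union>C" if gh: "g \<in> \<Union>C" "h \<in> \<Union>C" for g h
  proof -
    obtain G H where GH: "G \<in> C" "H \<in> C" "g \<in> G" "h \<in> H" using gh by blast
    then have "g \<in> H \<and> h \<in> H \<or> g \<in> G \<and> h \<in> G" using chain[of G H] by blast
    then show ?thesis using GH sub subspace_add by blast
  qed
  show "c *\<^sub>R g \<in> \<Union>C" if "g \<in> \<Union>C" for c g
    using that sub subspace_scale by blast
  show "case q of (x, b) \<Rightarrow> b \<le> p x" if "q \<in> \<Union>C" for q
    using that dom dominated_graph_le by (cases q) blast
qed

lemma dominated_graph_extension_value:
  assumes p: "sublinear p" and G: "dominated_graph p G"
  shows "\<exists>c. \<forall>(x, b)\<in>G. b - p (x - v) \<le> c \<and> c \<le> p (x + v) - b"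
proof -
  have sub: "subspace G" using G unfolding dominated_graph_def by blast
  have gap: "b - p (x - v) \<le> p (y + v) - b'" if "(x, b) \<in> G" "(y, b') \<in> G" for x b y b'
  proof -
    have "b + b' \<le> p (x + y)"
      using dominated_graph_le[OF G] subspace_add[OF sub that] by simp
    also have "\<dots> \<le> p (x - v) + p (y + v)" using sublinear_add[OF p, of "x - v" "y + v"] by simp
    finally show ?thesis by simp
  qed
  define S where "S = {b - p (x - v) | x b. (x, b) \<in> G}"
  have zero: "(0, 0) \<in> G" using subspace_0[OF sub] by (simp add: zero_prod_def)
  then have "S \<noteq> {}" unfolding S_def by auto
  moreover have "bdd_above S"
    by (rule bdd_aboveI[of _ "p v"]) (use gap[OF _ zero] in \<open>auto simp: S_def\<close>)
  then have "\<forall>(x, b)\<in>G. b - p (x - v) \<le> Sup S \<and> Sup S \<le> p (x + v) - b"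
    using gap by (auto intro!: cSup_upper cSup_least simp: S_def)
  then show ?thesis by blast
qed

lemma dominated_graph_extension_le:
  assumes p: "sublinear p" and G: "dominated_graph p G" and xb: "(x, b) \<in> G"
    and c: "\<And>x b. (x, b) \<in> G \<Longrightarrow> b - p (x - v) \<le> c \<and> c \<le> p (x + v) - b"
  shows "b + l * c \<le> p (x + l *\<^sub>R v)"
proof -
  have "subspace G" using G unfolding dominated_graph_def by blast
  then have scaled: "(s *\<^sub>R x, s * b) \<in> G" for s using subspace_scale[OF _ xb] by simp
  show ?thesis
  proof (cases l "0::real" rule: linorder_cases)
    case less
    have "inverse (- l) * b - p (inverse (- l) *\<^sub>R x - v) \<le> c" using c[OF scaled] by blast
    then have bound: "b - (- l) * p (inverse (- l) *\<^sub>R x - v) \<le> (- l) * c"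
      using less by (simp add: field_simps)
    have "(- l) * p (inverse (- l) *\<^sub>R x - v) = p ((- l) *\<^sub>R (inverse (- l) *\<^sub>R x - v))"
      using sublinear_scaleR[OF p, of "- l"] less by simp
    also have "(- l) *\<^sub>R (inverse (- l) *\<^sub>R x - v) = x + l *\<^sub>R v"
      using less by (simp add: algebra_simps)
    finally show ?thesis using bound by simp
  next
    case equal
    then show ?thesis using dominated_graph_le[OF G xb] by simp
  next
    case greater
    have "c \<le> p (inverse l *\<^sub>R x + v) - inverse l * b" using c[OF scaled] by blast
    then have "l * c \<le> l * p (inverse l *\<^sub>R x + v) - b"
      using greater by (simp add: field_simps)
    also have "l * p (inverse l *\<^sub>R x + v) = p (l *\<^sub>R (inverse l *\<^sub>R x + v))"
      using sublinear_scaleR[OF p greater] by simp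
    also have "l *\<^sub>R (inverse l *\<^sub>R x + v) = x + l *\<^sub>R v"
      using greater by (simp add: algebra_simps)
    finally show ?thesis by simp
  qed
qed

lemma dominated_graph_extend:
  assumes p: "sublinear p" and G: "dominated_graph p G"
  shows "\<exists>c. dominated_graph p {g + k | g k. g \<in> G \<and> k \<in> span {(v, c)}}"
proof -
  obtain c where c: "\<And>x b. (x, b) \<in> G \<Longrightarrow> b - p (x - v) \<le> c \<and> c \<le> p (x + v) - b"
    using dominated_graph_extension_value[OF assms] by fast
  have "subspace G" using G unfolding dominated_graph_def by blast
  then have "subspace {g + k | g k. g \<in> G \<and> k \<in> span {(v, c)}}"
    by (intro subspace_sums subspace_span)
  moreover have "\<forall>(x, b)\<in>{g + k | g k. g \<in> G \<and> k \<in> span {(v, c)}}. b \<le> p x"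
    using dominated_graph_extension_le[OF p G _ c] by (auto simp: span_singleton)
  ultimately show ?thesis unfolding dominated_graph_def by blast
qed

lemma dominated_graph_total_imp_linear:
  assumes p: "sublinear p" and M: "dominated_graph p M" and total: "\<And>x. \<exists>b. (x, b) \<in> M"
  shows "\<exists>F. linear F \<and> (\<forall>x. (x, F x) \<in> M)"
proof -
  define F where "F x = (THE b. (x, b) \<in> M)" for x
  have F_eq: "F x = b" if "(x, b) \<in> M" for x b
    unfolding F_def
  proof (rule the_equality)
    show "(x, b) \<in> M" by (fact that)
    show "b' = b" if "(x, b') \<in> M" for b' using dominated_graph_unique[OF p M that \<open>(x, b) \<in> M\<close>] .
  qed
  have FM: "(x, F x) \<in> M" for x
  proof -
    obtain b where "(x, b) \<in> M" using total by blast
    with F_eq show ?thesis by simp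
  qed
  have sub: "subspace M" using M unfolding dominated_graph_def by blast
  have "linear F"
  proof (rule linearI)
    fix x y :: 'a and c :: real
    have "(x + y, F x + F y) \<in> M" using subspace_add[OF sub FM FM] by simp
    then show "F (x + y) = F x + F y" by (rule F_eq)
    have "(c *\<^sub>R x, c * F x) \<in> M" using subspace_scale[OF sub FM] by simp
    then show "F (c *\<^sub>R x) = c *\<^sub>R F x" using F_eq[of "c *\<^sub>R x" "c * F x"] by simp
  qed
  then show ?thesis using FM by blast
qed

lemma dominated_graph_maximal:
  assumes "dominated_graph p G\<^sub>0"
  shows "\<exists>M. dominated_graph p M \<and> G\<^sub>0 \<subseteq> M \<and> (\<forall>G. dominated_graph p G \<and> M \<subseteq> G \<longrightarrow> G = M)"
proof -
  define A where "A = {G. dominated_graph p G \<and> G\<^sub>0 \<subseteq> G}"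
  have "\<exists>U\<in>A. \<forall>G\<in>C. G \<subseteq> U" if C: "C \<in> chains A" for C
  proof (cases "C = {}")
    case True
    then show ?thesis using assms unfolding A_def by blast
  next
    case False
    have "C \<in> chains {G. dominated_graph p G}"
      using C unfolding A_def chains_def chain_subset_def by blast
    then have "dominated_graph p (\<Union>C)" using False by (rule dominated_graph_chain_Union)
    moreover have "G\<^sub>0 \<subseteq> \<Union>C" using C False unfolding A_def chains_def by blast
    ultimately show ?thesis unfolding A_def by blast
  qed
  then have "\<exists>M\<in>A. \<forall>G\<in>A. M \<subseteq> G \<longrightarrow> G = M" by (intro Zorn_Lemma2) blast
  then obtain M where "M \<in> A" and maximal: "\<forall>G\<in>A. M \<subseteq> G \<longrightarrow> G = M" ..
  then have "dominated_graph p M" and "G\<^sub>0 \<subseteq> M" unfolding A_def by auto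
  moreover have "\<forall>G. dominated_graph p G \<and> M \<subseteq> G \<longrightarrow> G = M"
    using maximal \<open>G\<^sub>0 \<subseteq> M\<close> unfolding A_def by blast
  ultimately show ?thesis by blast
qed

lemma dominated_graph_maximal_total:
  assumes p: "sublinear p" and M: "dominated_graph p M"
    and maximal: "\<And>G. dominated_graph p G \<Longrightarrow> M \<subseteq> G \<Longrightarrow> G = M"
  shows "\<exists>b. (v, b) \<in> M"
proof -
  obtain c where ext: "dominated_graph p {g + k | g k. g \<in> M \<and> k \<in> span {(v, c)}}"
    (is "dominated_graph p ?E")
    using dominated_graph_extend[OF p M] by blast
  have "g \<in> ?E" if "g \<in> M" for g
    using that span_zero by (intro CollectI exI[of _ g] exI[of _ 0]) simp
  then have "?E = M" using maximal[OF ext] by blast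
  moreover have "(v, c) \<in> ?E"
    using subspace_0[of M] M span_base[of "(v, c)"] unfolding dominated_graph_def
    by (intro CollectI exI[of _ 0] exI[of _ "(v, c)"]) simp
  ultimately show ?thesis by blast
qed

theorem hahn_banach_sublinear:
  assumes p: "sublinear p" and dom: "\<And>s. s * a \<le> p (s *\<^sub>R w)"
  shows "\<exists>F. linear F \<and> F w = a \<and> (\<forall>x. F x \<le> p x)"
proof -
  have "\<forall>(x, b)\<in>span {(w, a)}. b \<le> p x" using dom by (auto simp: span_singleton)
  then have "dominated_graph p (span {(w, a)})"
    unfolding dominated_graph_def by (simp add: subspace_span)
  from dominated_graph_maximal[OF this] obtain M
    where "dominated_graph p M \<and> span {(w, a)} \<subseteq> M \<and> (\<forall>G. dominated_graph p G \<and> M \<subseteq> G \<longrightarrow> G = M)" ..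
  then have M: "dominated_graph p M" and line: "span {(w, a)} \<subseteq> M"
    and maximal: "\<And>G. dominated_graph p G \<Longrightarrow> M \<subseteq> G \<Longrightarrow> G = M" by auto
  have wa: "(w, a) \<in> M" using line span_base[of "(w, a)" "{(w, a)}"] by blast
  have "\<exists>b. (v, b) \<in> M" for v by (rule dominated_graph_maximal_total[OF p M maximal])
  then obtain F where "linear F" and FM: "\<And>x. (x, F x) \<in> M"
    using dominated_graph_total_imp_linear[OF p M] by blast
  moreover have "F w = a" using dominated_graph_unique[OF p M FM wa] .
  moreover have "F x \<le> p x" for x using dominated_graph_le[OF M FM] .
  ultimately show ?thesis by blast
qed

section \<open>Minkowski gauge and separation of closed convex sets\<close>

lemma sublinear_norm: "sublinear norm"
  unfolding sublinear_def by (simp add: norm_triangle_ineq)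

lemma linear_le_norm_imp_bounded_linear:
  assumes F: "linear F" and le: "\<And>x. F x \<le> K * norm x"
  shows "bounded_linear F"
proof -
  have "\<bar>F x\<bar> \<le> norm x * K" for x
    using le[of x] le[of "- x"] linear_neg[OF F, of x] by (simp add: abs_le_iff mult.commute)
  then show ?thesis
    using F by (intro bounded_linear_intro[where K=K]) (auto simp: linear_add linear_scale)
qed

text \<open>\<open>Inf {}\<close> is a junk value, so the gauge is only meaningful for absorbing \<open>U\<close>; the lemmas
  below assume that \<open>U\<close> contains a ball around \<open>0\<close>.\<close>

definition minkowski_gauge :: "'a::real_vector set \<Rightarrow> 'a \<Rightarrow> real" where
  "minkowski_gauge U x = Inf {l. 0 < l \<and> inverse l *\<^sub>R x \<in> U}"

lemma minkowski_gauge_le: "0 < l \<Longrightarrow> inverse l *\<^sub>R x \<in> U \<Longrightarrow> minkowski_gauge U x \<le> l"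
  unfolding minkowski_gauge_def by (rule cInf_lower) (auto intro: bdd_belowI[of _ 0])

context
  fixes U :: "'a::real_normed_vector set" and r :: real
  assumes r: "0 < r" and ball_U: "ball 0 r \<subseteq> U"
begin

lemma minkowski_gauge_absorbs:
  assumes "norm x / r < l"
  shows "0 < l \<and> inverse l *\<^sub>R x \<in> U"
proof -
  have "0 \<le> norm x / r" using r by simp
  then have l: "0 < l" using assms by linarith
  have "norm (inverse l *\<^sub>R x) = norm x / l" using l by (simp add: divide_inverse mult.commute)
  also have "\<dots> < r" using assms l r by (simp add: field_simps)
  finally show ?thesis using l ball_U by auto
qed

lemma minkowski_gauge_le_norm: "minkowski_gauge U x \<le> norm x / r"
proof (rule field_le_epsilon)
  fix e :: real assume "0 < e"
  then have "0 < norm x / r + e \<and> inverse (norm x / r + e) *\<^sub>R x \<in> U"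
    by (intro minkowski_gauge_absorbs) simp
  then show "minkowski_gauge U x \<le> norm x / r + e"
    using minkowski_gauge_le by blast
qed

lemma minkowski_gauge_nonneg: "0 \<le> minkowski_gauge U x"
  unfolding minkowski_gauge_def
  using minkowski_gauge_absorbs[of x "norm x / r + 1"] by (intro cInf_greatest) auto

lemma minkowski_gauge_add_le:
  assumes "convex U"
  shows "minkowski_gauge U (x + y) \<le> minkowski_gauge U x + minkowski_gauge U y"
proof -
  have sum: "minkowski_gauge U (x + y) \<le> l + m"
    if l: "0 < l" "inverse l *\<^sub>R x \<in> U" and m: "0 < m" "inverse m *\<^sub>R y \<in> U" for l m
  proof (rule minkowski_gauge_le)
    have "(l / (l + m)) *\<^sub>R (inverse l *\<^sub>R x) + (m / (l + m)) *\<^sub>R (inverse m *\<^sub>R y) \<in> U"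
      by (rule convexD[OF assms l(2) m(2)]) (use l m in \<open>auto simp: divide_simps\<close>)
    moreover have "l / (l + m) * inverse l = inverse (l + m)" "m / (l + m) * inverse m = inverse (l + m)"
      using l(1) m(1) by (simp_all add: field_simps)
    ultimately show "inverse (l + m) *\<^sub>R (x + y) \<in> U" by (simp add: scaleR_add_right)
  qed (use l m in simp)
  have "minkowski_gauge U (x + y) - minkowski_gauge U y \<le> l" if l: "0 < l" "inverse l *\<^sub>R x \<in> U" for l
  proof -
    have "minkowski_gauge U (x + y) - l \<le> minkowski_gauge U y"
      unfolding minkowski_gauge_def[of U y]
      using minkowski_gauge_absorbs[of y "norm y / r + 1"] sum[OF l] by (intro cInf_greatest) force+
    then show ?thesis by simp
  qed
  then have "minkowski_gauge U (x + y) - minkowski_gauge U y \<le> minkowski_gauge U x"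
    unfolding minkowski_gauge_def[of U x]
    using minkowski_gauge_absorbs[of x "norm x / r + 1"] by (intro cInf_greatest) auto
  then show ?thesis by simp
qed

lemma minkowski_gauge_scaleR_le:
  assumes c: "0 < c"
  shows "minkowski_gauge U (c *\<^sub>R x) \<le> c * minkowski_gauge U x"
proof -
  have "minkowski_gauge U (c *\<^sub>R x) \<le> c * l" if "0 < l" "inverse l *\<^sub>R x \<in> U" for l
  proof (rule minkowski_gauge_le)
    have "inverse (c * l) *\<^sub>R (c *\<^sub>R x) = inverse l *\<^sub>R x" using c by simp
    then show "inverse (c * l) *\<^sub>R (c *\<^sub>R x) \<in> U" using that(2) by (simp only:)
  qed (use that c in simp)
  then have "minkowski_gauge U (c *\<^sub>R x) / c \<le> minkowski_gauge U x"
    unfolding minkowski_gauge_def[of U x]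
    using minkowski_gauge_absorbs[of x "norm x / r + 1"] c
    by (intro cInf_greatest) (auto simp: field_simps)
  then show ?thesis using c by (simp add: field_simps)
qed

lemma sublinear_minkowski_gauge: "convex U \<Longrightarrow> sublinear (minkowski_gauge U)"
  unfolding sublinear_def by (intro conjI allI impI minkowski_gauge_add_le minkowski_gauge_scaleR_le)

lemma minkowski_gauge_ge_one:
  assumes "convex U" and "w \<notin> U"
  shows "1 \<le> minkowski_gauge U w"
proof (rule ccontr)
  assume "\<not> 1 \<le> minkowski_gauge U w"
  then obtain l where l: "0 < l" "l < 1" "inverse l *\<^sub>R w \<in> U"
    using cInf_lessD[of "{l. 0 < l \<and> inverse l *\<^sub>R w \<in> U}" 1]
      minkowski_gauge_absorbs[of w "norm w / r + 1"] unfolding minkowski_gauge_def by force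
  have "0 \<in> U" using ball_U r by auto
  have "l *\<^sub>R (inverse l *\<^sub>R w) + (1 - l) *\<^sub>R 0 \<in> U"
    by (rule convexD[OF assms(1) l(3) \<open>0 \<in> U\<close>]) (use l in auto)
  then show False using assms(2) l by simp
qed

lemma minkowski_gauge_separation:
  assumes U: "convex U" and w: "w \<notin> U"
  shows "\<exists>F::'a \<Rightarrow> real. bounded_linear F \<and> F w = 1 \<and> (\<forall>u\<in>U. F u \<le> 1)"
proof -
  have dom: "s * 1 \<le> minkowski_gauge U (s *\<^sub>R w)" for s
  proof (cases "0 < s")
    case True
    then show ?thesis
      using sublinear_scaleR[OF sublinear_minkowski_gauge[OF U] True] minkowski_gauge_ge_one[OF U w]
      by simp
  next
    case False
    then show ?thesis using minkowski_gauge_nonneg[of "s *\<^sub>R w"] by linarith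
  qed
  obtain F where F: "linear F" "F w = 1" "\<And>x. F x \<le> minkowski_gauge U x"
    using hahn_banach_sublinear[OF sublinear_minkowski_gauge[OF U] dom] by blast
  have "F x \<le> inverse r * norm x" for x
    using F(3)[of x] minkowski_gauge_le_norm[of x] by (simp add: field_simps)
  then have "bounded_linear F" by (rule linear_le_norm_imp_bounded_linear[OF F(1)])
  moreover have "F u \<le> 1" if "u \<in> U" for u
    using F(3)[of u] minkowski_gauge_le[of 1 u U] that by simp
  ultimately show ?thesis using F(2) by blast
qed

end

lemma separating_functional_ball_sum:
  fixes C :: "'a::real_normed_vector set"
  assumes C: "convex C" "c0 \<in> C" and r: "0 < r" "ball z r \<inter> C = {}"
  shows "\<exists>F::'a \<Rightarrow> real. bounded_linear F \<and> F (z - c0) = 1 \<and>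
    (\<forall>c\<in>C. \<forall>b. norm b < r \<longrightarrow> F (c - c0 + b) \<le> 1)"
proof -
  define U where "U = (\<Union>x\<in>(\<lambda>c. c - c0) ` C. \<Union>y\<in>ball 0 r. {x + y})"
  have U: "convex U" unfolding U_def by (intro convex_sums convex_translation_subtract C convex_ball)
  have U_mem: "c - c0 + b \<in> U" if "c \<in> C" "norm b < r" for c b
  proof -
    have "c - c0 \<in> (\<lambda>c. c - c0) ` C" "b \<in> ball 0 r" using that by (auto simp: dist_norm)
    then show ?thesis unfolding U_def by blast
  qed
  have ball_U: "ball 0 r \<subseteq> U" using U_mem[OF C(2)] by (auto simp: dist_norm)
  have w: "z - c0 \<notin> U"
  proof
    assume "z - c0 \<in> U"
    then obtain c b where "c \<in> C" "b \<in> ball 0 r" "z - c0 = c - c0 + b" unfolding U_def by blast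
    then have "c \<in> ball z r" by (simp add: dist_norm algebra_simps)
    then show False using r(2) \<open>c \<in> C\<close> by blast
  qed
  obtain F :: "'a \<Rightarrow> real" where "bounded_linear F" "F (z - c0) = 1" "\<forall>u\<in>U. F u \<le> 1"
    using minkowski_gauge_separation[OF r(1) ball_U U w] by blast
  then show ?thesis using U_mem by (intro exI[of _ F]) auto
qed

theorem separating_functional_closed_point:
  fixes C :: "'a::real_normed_vector set"
  assumes cC: "convex C" and clC: "closed C" and z: "z \<notin> C"
  shows "\<exists>(l::'a \<Rightarrow> real) g. bounded_linear l \<and> 0 < g \<and> (\<forall>c\<in>C. l c \<le> l z - g)"
proof (cases "C = {}")
  case True
  then show ?thesis by (intro exI[of _ "\<lambda>_. 0"] exI[of _ 1]) (simp add: bounded_linear_zero)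
next
  case False
  then obtain c0 where c0: "c0 \<in> C" by blast
  obtain r where r: "0 < r" "ball z r \<inter> C = {}"
    using open_contains_ball[of "- C"] clC z unfolding closed_def by blast
  from separating_functional_ball_sum[OF cC c0 r] obtain F :: "'a \<Rightarrow> real"
    where F: "bounded_linear F" "F (z - c0) = 1"
    and le: "\<forall>c\<in>C. \<forall>b. norm b < r \<longrightarrow> F (c - c0 + b) \<le> 1" by blast
  have lin: "linear F" using F(1) by (rule bounded_linear.linear)
  define g where "g = r / (2 * norm (z - c0))"
  have "z \<in> ball z r" using r(1) by simp
  then have "z \<noteq> c0" using c0 r(2) by blast
  then have "z - c0 \<noteq> 0" by simp
  then have "0 < g" and small: "norm (g *\<^sub>R (z - c0)) < r" using r(1) unfolding g_def by simp_all
  have "F c \<le> F z - g" if "c \<in> C" for c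
  proof -
    have "F (c - c0 + g *\<^sub>R (z - c0)) = F c - F c0 + g * F (z - c0)"
      by (simp only: linear_add[OF lin] linear_diff[OF lin] linear_scale[OF lin] real_scaleR_def)
    moreover have "F z = F c0 + 1" using F(2) linear_diff[OF lin, of z c0] by simp
    ultimately show ?thesis using le[rule_format, OF that small] F(2) by simp
  qed
  then show ?thesis using F(1) \<open>0 < g\<close> by blast
qed

lemma exists_norming_functional:
  fixes x :: "'a::real_normed_vector"
  shows "\<exists>y::'a \<Rightarrow>\<^sub>L real. norm y \<le> 1 \<and> blinfun_apply y x = norm x"
proof -
  have "s * norm x \<le> norm (s *\<^sub>R x)" for s by (simp add: mult_right_mono)
  then obtain F where F: "linear F" "F x = norm x" "\<And>v. F v \<le> norm v"
    using hahn_banach_sublinear[OF sublinear_norm] by blast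
  have bl: "bounded_linear F" by (rule linear_le_norm_imp_bounded_linear[OF F(1), of 1]) (simp add: F(3))
  have "norm (F v) \<le> 1 * norm v" for v
    using F(3)[of v] F(3)[of "- v"] linear_neg[OF F(1), of v] by simp
  then have "norm (Blinfun F) \<le> 1"
    by (intro norm_blinfun_bound) (simp_all add: bounded_linear_Blinfun_apply[OF bl])
  then show ?thesis using F(2) bounded_linear_Blinfun_apply[OF bl] by auto
qed

lemma exists_half_norming_vector:
  fixes y :: "'a::real_normed_vector \<Rightarrow>\<^sub>L real"
  shows "\<exists>u. norm u \<le> 1 \<and> norm y / 2 \<le> blinfun_apply y u"
proof (rule ccontr)
  assume "\<not> ?thesis"
  then have small: "\<And>u. norm u \<le> 1 \<Longrightarrow> blinfun_apply y u < norm y / 2" by (meson not_le)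
  have "\<bar>blinfun_apply y v\<bar> \<le> norm y / 2 * norm v" for v
  proof (cases "v = 0")
    case False
    define u where "u = v /\<^sub>R norm v"
    have "norm u \<le> 1" "norm (- u) \<le> 1" using False unfolding u_def by auto
    then have "blinfun_apply y u < norm y / 2" "blinfun_apply y (- u) < norm y / 2" using small by auto
    then have "\<bar>blinfun_apply y u\<bar> \<le> norm y / 2" by (simp add: blinfun.minus_right)
    moreover have "blinfun_apply y v = norm v * blinfun_apply y u"
      using False unfolding u_def by (simp add: blinfun.scaleR_right)
    moreover have "norm v * (2 * \<bar>blinfun_apply y u\<bar>) \<le> norm v * norm y"
      using calculation(1) by (intro mult_left_mono) auto
    ultimately show ?thesis by (simp add: abs_mult algebra_simps)
  qed simp
  then have "norm y \<le> norm y / 2" by (intro norm_blinfun_bound) auto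
  then show False using small[of 0] by simp
qed

section \<open>Conjugates with respect to a pairing\<close>

text \<open>The conjugate \<open>\<phi>\<^sup>*\<close> and the biconjugate \<open>\<phi>\<^sup>*\<^sup>*\<close> are both instances, with the duality
  pairing read in the two possible orders.\<close>

definition pairing_conjugate :: "('b \<Rightarrow> 'c \<Rightarrow> real) \<Rightarrow> ('b \<Rightarrow> ereal) \<Rightarrow> 'c \<Rightarrow> ereal" where
  "pairing_conjugate P f v = (SUP u. ereal (P u v) - f u)"

lemma convex_conjugate_eq_pairing_conjugate:
  "convex_conjugate \<phi> = pairing_conjugate (\<lambda>x y. blinfun_apply y x) \<phi>"
  unfolding convex_conjugate_def pairing_conjugate_def ..

lemma pairing_conjugate_ge: "ereal (P u v) - f u \<le> pairing_conjugate P f v"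
  unfolding pairing_conjugate_def by (rule SUP_upper) simp

lemma pairing_conjugate_le:
  assumes "\<And>u. f u \<noteq> -\<infinity>" and "\<And>u s. f u = ereal s \<Longrightarrow> P u v - s \<le> m"
  shows "pairing_conjugate P f v \<le> ereal m"
  unfolding pairing_conjugate_def
proof (rule SUP_least)
  show "ereal (P u v) - f u \<le> ereal m" for u
    using assms[of u] by (cases "f u") auto
qed

lemma fenchel_young: "ereal (P u v) - pairing_conjugate P f v \<le> f u"
  using pairing_conjugate_ge[of P u v f] by (cases "f u"; cases "pairing_conjugate P f v") auto

lemma ereal_convexD:
  "ereal_convex f \<Longrightarrow> 0 < t \<Longrightarrow> t < 1 \<Longrightarrow> f (t *\<^sub>R x + (1 - t) *\<^sub>R y) \<le> ereal t * f x + ereal (1 - t) * f y"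
  unfolding ereal_convex_def by blast

lemma ereal_convex_SUP:
  assumes "\<And>i. ereal_convex (f i)"
  shows "ereal_convex (\<lambda>x. SUP i. f i x)"
  unfolding ereal_convex_def
proof (intro allI impI)
  fix x y and t :: real assume t: "0 < t \<and> t < 1"
  show "(SUP i. f i (t *\<^sub>R x + (1 - t) *\<^sub>R y)) \<le> ereal t * (SUP i. f i x) + ereal (1 - t) * (SUP i. f i y)"
  proof (rule SUP_least)
    fix i
    have "f i (t *\<^sub>R x + (1 - t) *\<^sub>R y) \<le> ereal t * f i x + ereal (1 - t) * f i y"
      using assms t by (intro ereal_convexD) auto
    also have "\<dots> \<le> ereal t * (SUP i. f i x) + ereal (1 - t) * (SUP i. f i y)"
      using t by (intro add_mono ereal_mult_left_mono SUP_upper) auto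
    finally show "f i (t *\<^sub>R x + (1 - t) *\<^sub>R y) \<le> \<dots>" .
  qed
qed

lemma ereal_lsc_SUP:
  assumes "\<And>i. ereal_lsc (f i)"
  shows "ereal_lsc (\<lambda>x. SUP i. f i x)"
  unfolding ereal_lsc_def
proof
  fix c
  have "{x. (SUP i. f i x) \<le> c} = (\<Inter>i. {x. f i x \<le> c})" by (auto simp: SUP_le_iff)
  then show "closed {x. (SUP i. f i x) \<le> c}"
    using assms unfolding ereal_lsc_def by (simp add: closed_INT)
qed

lemma ereal_lsc_continuous: "continuous_on UNIV f \<Longrightarrow> ereal_lsc f"
  unfolding ereal_lsc_def by (simp add: closed_Collect_le continuous_on_const)

lemma ereal_convex_affine:
  assumes "linear g"
  shows "ereal_convex (\<lambda>v. ereal (g v) - a)"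
  unfolding ereal_convex_def
proof (intro allI impI)
  fix x y and t :: real assume t: "0 < t \<and> t < 1"
  have "g (t *\<^sub>R x + (1 - t) *\<^sub>R y) = t * g x + (1 - t) * g y"
    using assms by (simp add: linear_add linear_scale)
  then show "ereal (g (t *\<^sub>R x + (1 - t) *\<^sub>R y)) - a \<le> ereal t * (ereal (g x) - a) + ereal (1 - t) * (ereal (g y) - a)"
    using t by (cases a) (auto simp: algebra_simps)
qed

lemma pairing_conjugate_convex:
  assumes "\<And>u. linear (P u)"
  shows "ereal_convex (pairing_conjugate P f)"
  unfolding pairing_conjugate_def[abs_def] by (intro ereal_convex_SUP ereal_convex_affine assms)

lemma pairing_conjugate_lsc:
  assumes "\<And>u. continuous_on UNIV (P u)"
  shows "ereal_lsc (pairing_conjugate P f)"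
  unfolding pairing_conjugate_def[abs_def]
proof (intro ereal_lsc_SUP ereal_lsc_continuous)
  fix u
  show "continuous_on UNIV (\<lambda>v. ereal (P u v) - f u)"
    by (cases "f u") (auto intro!: continuous_intros assms)
qed

section \<open>The Fenchel-Moreau theorem\<close>

definition ereal_epigraph :: "('a \<Rightarrow> ereal) \<Rightarrow> ('a \<times> real) set" where
  "ereal_epigraph \<phi> = {(x, s). \<phi> x \<le> ereal s}"

lemma mem_ereal_epigraph [simp]: "(x, s) \<in> ereal_epigraph \<phi> \<longleftrightarrow> \<phi> x \<le> ereal s"
  unfolding ereal_epigraph_def by simp

lemma closed_ereal_epigraph:
  assumes "ereal_lsc \<phi>"
  shows "closed (ereal_epigraph \<phi>)"
proof -
  have "- ereal_epigraph \<phi> = (\<Union>r. (- {x. \<phi> x \<le> ereal r}) \<times> {..<r})"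
  proof (intro equalityI subsetI)
    fix q assume "q \<in> - ereal_epigraph \<phi>"
    then obtain x s where q: "q = (x, s)" "ereal s < \<phi> x" by (cases q) (auto simp: not_le)
    then obtain r where "ereal s < ereal r" "ereal r < \<phi> x" using ereal_dense2 by blast
    then have "q \<in> (- {x. \<phi> x \<le> ereal r}) \<times> {..<r}" using q by (simp add: not_le)
    then show "q \<in> (\<Union>r. (- {x. \<phi> x \<le> ereal r}) \<times> {..<r})" by blast
  next
    fix q assume "q \<in> (\<Union>r. (- {x. \<phi> x \<le> ereal r}) \<times> {..<r})"
    then obtain r where "q \<in> (- {x. \<phi> x \<le> ereal r}) \<times> {..<r}" by blast
    then obtain x s where q: "q = (x, s)" "ereal r < \<phi> x" "s < r" by (cases q) (auto simp: not_le)
    then have "ereal s < \<phi> x" using less_trans[of "ereal s" "ereal r"] by simp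
    then show "q \<in> - ereal_epigraph \<phi>" using q(1) by (simp add: not_le)
  qed
  moreover have "open ((- {x. \<phi> x \<le> ereal r}) \<times> {..<r})" for r
    using assms unfolding ereal_lsc_def by (intro open_Times) auto
  ultimately show ?thesis unfolding closed_def by (simp only:) (intro open_UN ballI)
qed

lemma convex_ereal_epigraph:
  assumes "ereal_convex \<phi>"
  shows "convex (ereal_epigraph \<phi>)"
proof (rule convexI)
  fix q1 q2 :: "'a \<times> real" and u v :: real
  assume "q1 \<in> ereal_epigraph \<phi>" "q2 \<in> ereal_epigraph \<phi>" and uv: "0 \<le> u" "0 \<le> v" "u + v = 1"
  then obtain x1 s1 x2 s2 where q: "q1 = (x1, s1)" "q2 = (x2, s2)"
    and le: "\<phi> x1 \<le> ereal s1" "\<phi> x2 \<le> ereal s2" by (cases q1, cases q2) auto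
  show "u *\<^sub>R q1 + v *\<^sub>R q2 \<in> ereal_epigraph \<phi>"
  proof (cases "u = 0 \<or> u = 1")
    case True
    then show ?thesis using uv q le by auto
  next
    case False
    then have u: "0 < u" "u < 1" and v: "v = 1 - u" using uv by auto
    have "\<phi> (u *\<^sub>R x1 + (1 - u) *\<^sub>R x2) \<le> ereal u * \<phi> x1 + ereal (1 - u) * \<phi> x2"
      using assms u by (intro ereal_convexD) auto
    also have "\<dots> \<le> ereal u * ereal s1 + ereal (1 - u) * ereal s2"
      using u le by (intro add_mono ereal_mult_left_mono) auto
    finally show ?thesis using q v by simp
  qed
qed

lemma bounded_linear_prod_real_decompose:
  fixes L :: "'a::real_normed_vector \<times> real \<Rightarrow> real"
  assumes L: "bounded_linear L"
  shows "\<exists>l b. bounded_linear l \<and> (\<forall>v s. L (v, s) = l v + s * b)"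
proof (intro exI conjI allI)
  show "bounded_linear (\<lambda>v. L (v, 0))"
    by (intro bounded_linear_compose[OF L] bounded_linear_Pair bounded_linear_ident bounded_linear_zero)
  have lin: "linear L" using L by (rule bounded_linear.linear)
  fix v s
  have "L ((v, 0) + s *\<^sub>R (0, 1)) = L (v, 0) + s * L (0, 1)"
    by (simp only: linear_add[OF lin] linear_scale[OF lin] real_scaleR_def)
  then show "L (v, s) = L (v, 0) + s * L (0, 1)" by simp
qed

lemma ereal_epigraph_separation:
  fixes \<phi> :: "'a::real_normed_vector \<Rightarrow> ereal"
  assumes lsc: "ereal_lsc \<phi>" and cvx: "ereal_convex \<phi>" and prp: "ereal_proper \<phi>"
    and below: "ereal t < \<phi> x"
  shows "\<exists>l b g. bounded_linear l \<and> b \<le> 0 \<and> 0 < g \<and>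
    (\<forall>v s. \<phi> v \<le> ereal s \<longrightarrow> l v + s * b + g \<le> l x + t * b)"
proof -
  have "(x, t) \<notin> ereal_epigraph \<phi>" using below by simp
  then obtain L and g :: real where L: "bounded_linear L" and g: "0 < g"
    and sep: "\<And>q. q \<in> ereal_epigraph \<phi> \<Longrightarrow> L q \<le> L (x, t) - g"
    using separating_functional_closed_point[OF convex_ereal_epigraph[OF cvx]
        closed_ereal_epigraph[OF lsc]] by blast
  obtain l b where l: "bounded_linear l" and split: "\<And>v s. L (v, s) = l v + s * b"
    using bounded_linear_prod_real_decompose[OF L] by blast
  have sep': "l v + s * b + g \<le> l x + t * b" if "\<phi> v \<le> ereal s" for v s
    using sep[of "(v, s)"] that by (simp add: split)
  obtain x1 where "\<phi> x1 \<noteq> \<infinity>" "\<phi> x1 \<noteq> -\<infinity>" using prp unfolding ereal_proper_def by blast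
  then obtain s1 where s1: "\<phi> x1 \<le> ereal s1" by (cases "\<phi> x1") auto
  have "b \<le> 0"
  proof (rule ccontr)
    assume "\<not> b \<le> 0"
    define s where "s = max s1 ((l x + t * b - l x1) / b)"
    have "\<phi> x1 \<le> ereal s" using s1 unfolding s_def by (simp add: order_trans)
    moreover have "(l x + t * b - l x1) / b * b \<le> s * b"
      using \<open>\<not> b \<le> 0\<close> unfolding s_def by (intro mult_right_mono) auto
    moreover have "(l x + t * b - l x1) / b * b = l x + t * b - l x1"
      using \<open>\<not> b \<le> 0\<close> by simp
    ultimately show False using sep'[of x1 s] g by linarith
  qed
  then show ?thesis using l g sep' by blast
qed

lemma convex_conjugate_nonvertical_separation:
  fixes \<phi> :: "'a::real_normed_vector \<Rightarrow> ereal"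
  assumes l: "bounded_linear l" and b: "b < 0" and finite: "\<And>v. \<phi> v \<noteq> -\<infinity>"
    and sep: "\<And>v s. \<phi> v \<le> ereal s \<Longrightarrow> l v + s * b \<le> l x + t * b"
  shows "\<exists>y. ereal t \<le> ereal (blinfun_apply y x) - convex_conjugate \<phi> y"
proof -
  define y where "y = Blinfun (\<lambda>v. l v / - b)"
  have "bounded_linear (\<lambda>v. l v / - b)" by (rule bounded_linear_compose[OF bounded_linear_divide l])
  then have y: "blinfun_apply y v = l v / - b" for v
    unfolding y_def by (simp add: bounded_linear_Blinfun_apply)
  have "convex_conjugate \<phi> y \<le> ereal (blinfun_apply y x - t)"
    unfolding convex_conjugate_eq_pairing_conjugate
  proof (rule pairing_conjugate_le[OF finite])
    fix v s assume "\<phi> v = ereal s"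
    then have "(l v + s * b) / - b \<le> (l x + t * b) / - b"
      using sep[of v s] b by (intro divide_right_mono) auto
    moreover have "(l v + s * b) / - b = l v / - b - s" "(l x + t * b) / - b = l x / - b - t"
      using b by (simp_all add: field_simps)
    ultimately show "blinfun_apply y v - s \<le> blinfun_apply y x - t" unfolding y by linarith
  qed
  then have "ereal t \<le> ereal (blinfun_apply y x) - convex_conjugate \<phi> y"
    by (cases "convex_conjugate \<phi> y") auto
  then show ?thesis by blast
qed

text \<open>For a vertical separating hyperplane: adding large multiples of it to an affine minorant
  \<open>y\<^sub>0 - m\<close> of \<open>\<phi>\<close> gives affine minorants that are arbitrarily large at \<open>x\<close>.\<close>

lemma convex_conjugate_separated_point:
  fixes \<phi> :: "'a::real_normed_vector \<Rightarrow> ereal"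
    and l :: "'a \<Rightarrow> real"
  assumes y0: "convex_conjugate \<phi> y0 = ereal m" and l: "bounded_linear l" and g: "0 < g"
    and finite: "\<And>v. \<phi> v \<noteq> -\<infinity>" and sep: "\<And>v s. \<phi> v \<le> ereal s \<Longrightarrow> l v + g \<le> l x"
  shows "\<exists>y. ereal t \<le> ereal (blinfun_apply y x) - convex_conjugate \<phi> y"
proof -
  define k where "k = max 0 ((t - blinfun_apply y0 x + m) / g)"
  have k: "0 \<le> k" "t \<le> blinfun_apply y0 x - m + k * g"
  proof -
    have "(t - blinfun_apply y0 x + m) / g * g \<le> k * g"
      unfolding k_def using g by (intro mult_right_mono) auto
    then show "t \<le> blinfun_apply y0 x - m + k * g" using g by simp
  qed (simp add: k_def)
  define y where "y = y0 + k *\<^sub>R Blinfun l"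
  have y: "blinfun_apply y v = blinfun_apply y0 v + k * l v" for v
    unfolding y_def by (simp add: blinfun.add_left blinfun.scaleR_left bounded_linear_Blinfun_apply[OF l])
  have "convex_conjugate \<phi> y \<le> ereal (m + k * (l x - g))"
    unfolding convex_conjugate_eq_pairing_conjugate
  proof (rule pairing_conjugate_le[OF finite])
    fix v s assume vs: "\<phi> v = ereal s"
    have "ereal (blinfun_apply y0 v) - \<phi> v \<le> convex_conjugate \<phi> y0"
      unfolding convex_conjugate_eq_pairing_conjugate by (rule pairing_conjugate_ge)
    then have "blinfun_apply y0 v - s \<le> m" using vs y0 by simp
    moreover have "k * l v \<le> k * (l x - g)" using sep[of v s] vs k(1) by (intro mult_left_mono) auto
    ultimately show "blinfun_apply y v - s \<le> m + k * (l x - g)" unfolding y by simp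
  qed
  then have "ereal (blinfun_apply y x - (m + k * (l x - g))) \<le> ereal (blinfun_apply y x) - convex_conjugate \<phi> y"
    by (cases "convex_conjugate \<phi> y") auto
  moreover have "blinfun_apply y x - (m + k * (l x - g)) = blinfun_apply y0 x - m + k * g"
    unfolding y by (simp add: algebra_simps)
  ultimately show ?thesis using k(2) by (metis ereal_less_eq(3) order_trans)
qed

text \<open>A point strictly below the graph of \<open>\<phi>\<close> can only be separated by a non-vertical hyperplane.\<close>

lemma convex_conjugate_finite_somewhere:
  fixes \<phi> :: "'a::real_normed_vector \<Rightarrow> ereal"
  assumes lsc: "ereal_lsc \<phi>" and cvx: "ereal_convex \<phi>" and prp: "ereal_proper \<phi>"
  shows "\<exists>y m. convex_conjugate \<phi> y = ereal m"
proof -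
  have finite: "\<phi> v \<noteq> -\<infinity>" for v using prp unfolding ereal_proper_def by blast
  obtain x1 where "\<phi> x1 \<noteq> \<infinity>" using prp unfolding ereal_proper_def by blast
  then obtain s1 where s1: "\<phi> x1 = ereal s1" using finite[of x1] by (cases "\<phi> x1") auto
  then obtain l b g where l: "bounded_linear l" and "b \<le> 0" "0 < g"
    and sep: "\<And>v s. \<phi> v \<le> ereal s \<Longrightarrow> l v + s * b + g \<le> l x1 + (s1 - 1) * b"
    using ereal_epigraph_separation[OF lsc cvx prp, of "s1 - 1" x1] by auto
  have "b < 0" using sep[of x1 s1] s1 \<open>0 < g\<close> by (simp add: algebra_simps)
  have "\<exists>y. ereal (s1 - 1) \<le> ereal (blinfun_apply y x1) - convex_conjugate \<phi> y"
  proof (rule convex_conjugate_nonvertical_separation[OF l \<open>b < 0\<close> finite])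
    show "l v + s * b \<le> l x1 + (s1 - 1) * b" if "\<phi> v \<le> ereal s" for v s
      using sep[OF that] \<open>0 < g\<close> by linarith
  qed
  then obtain y where y: "ereal (s1 - 1) \<le> ereal (blinfun_apply y x1) - convex_conjugate \<phi> y" ..
  have "ereal (blinfun_apply y x1) - \<phi> x1 \<le> convex_conjugate \<phi> y"
    unfolding convex_conjugate_eq_pairing_conjugate by (rule pairing_conjugate_ge)
  then show ?thesis using y s1 by (cases "convex_conjugate \<phi> y") auto
qed

lemma convex_conjugate_affine_minorant_above:
  fixes \<phi> :: "'a::real_normed_vector \<Rightarrow> ereal"
  assumes lsc: "ereal_lsc \<phi>" and cvx: "ereal_convex \<phi>" and prp: "ereal_proper \<phi>"
    and below: "ereal t < \<phi> x"
  shows "\<exists>y. ereal t \<le> ereal (blinfun_apply y x) - convex_conjugate \<phi> y"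
proof -
  have finite: "\<phi> v \<noteq> -\<infinity>" for v using prp unfolding ereal_proper_def by blast
  obtain l b g where l: "bounded_linear l" and b: "b \<le> 0" and g: "0 < g"
    and sep: "\<And>v s. \<phi> v \<le> ereal s \<Longrightarrow> l v + s * b + g \<le> l x + t * b"
    using ereal_epigraph_separation[OF lsc cvx prp below] by blast
  show ?thesis
  proof (cases "b = 0")
    case True
    obtain y0 m where y0: "convex_conjugate \<phi> y0 = ereal m"
      using convex_conjugate_finite_somewhere[OF lsc cvx prp] by blast
    show ?thesis
    proof (rule convex_conjugate_separated_point[OF y0 l g finite])
      show "l v + g \<le> l x" if "\<phi> v \<le> ereal s" for v s using sep[OF that] True by simp
    qed
  next
    case False
    then have "b < 0" using b by simp
    show ?thesis
    proof (rule convex_conjugate_nonvertical_separation[OF l \<open>b < 0\<close> finite])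
      show "l v + s * b \<le> l x + t * b" if "\<phi> v \<le> ereal s" for v s
        using sep[OF that] g by linarith
    qed
  qed
qed

theorem fenchel_moreau:
  fixes \<phi> :: "'a::real_normed_vector \<Rightarrow> ereal"
  assumes lsc: "ereal_lsc \<phi>" and cvx: "ereal_convex \<phi>" and prp: "ereal_proper \<phi>"
  shows "pairing_conjugate (\<lambda>y x. blinfun_apply y x) (convex_conjugate \<phi>) = \<phi>"
proof (rule ext, rule antisym)
  fix x
  show "pairing_conjugate (\<lambda>y x. blinfun_apply y x) (convex_conjugate \<phi>) x \<le> \<phi> x"
    unfolding pairing_conjugate_def[of blinfun_apply]
  proof (rule SUP_least)
    show "ereal (blinfun_apply y x) - convex_conjugate \<phi> y \<le> \<phi> x" for y
      unfolding convex_conjugate_eq_pairing_conjugate by (rule fenchel_young)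
  qed
  show "\<phi> x \<le> pairing_conjugate (\<lambda>y x. blinfun_apply y x) (convex_conjugate \<phi>) x"
    (is "_ \<le> ?\<phi>\<^sub>2")
  proof (rule ccontr)
    assume "\<not> \<phi> x \<le> ?\<phi>\<^sub>2"
    then have "?\<phi>\<^sub>2 < \<phi> x" by simp
    then obtain t where t: "?\<phi>\<^sub>2 < ereal t" "ereal t < \<phi> x" using ereal_dense2 by blast
    obtain y where "ereal t \<le> ereal (blinfun_apply y x) - convex_conjugate \<phi> y"
      using convex_conjugate_affine_minorant_above[OF lsc cvx prp t(2)] by blast
    also have "\<dots> \<le> ?\<phi>\<^sub>2" by (rule pairing_conjugate_ge)
    finally show False using t(1) by simp
  qed
qed

section \<open>Orlicz functions and their conjugates\<close>

lemma ereal_convex_even_min_zero: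
  assumes "ereal_even f" and "ereal_convex f"
  shows "f 0 \<le> f x"
proof -
  have "f ((1/2) *\<^sub>R x + (1 - 1/2) *\<^sub>R (- x)) \<le> ereal (1/2) * f x + ereal (1 - 1/2) * f (- x)"
    by (rule ereal_convexD[OF assms(2)]) auto
  moreover have "ereal (1/2) * f x + ereal (1/2) * f x = f x" by (cases "f x") auto
  ultimately show ?thesis using assms(1) unfolding ereal_even_def by (simp add: scaleR_right_diff_distrib)
qed

lemma ereal_convex_scale_le:
  assumes "ereal_convex f" and "f 0 = 0" and "0 < t" and "t \<le> 1"
  shows "f (t *\<^sub>R x) \<le> ereal t * f x"
proof (cases "t = 1")
  case False
  then have "f (t *\<^sub>R x + (1 - t) *\<^sub>R 0) \<le> ereal t * f x + ereal (1 - t) * f 0"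
    using assms by (intro ereal_convexD) auto
  then show ?thesis using assms(2) by simp
qed simp

lemma at_zero_neq_bot:
  fixes z :: "'a::real_normed_vector"
  assumes "z \<noteq> 0"
  shows "at (0::'a) \<noteq> bot"
proof
  assume "at (0::'a) = bot"
  then obtain d where d: "0 < d" "\<And>y::'a. y \<noteq> 0 \<Longrightarrow> dist y 0 < d \<Longrightarrow> False"
    using eventually_False[of "at (0::'a)"] unfolding eventually_at by auto
  have "(d / (2 * norm z)) *\<^sub>R z \<noteq> 0" "dist ((d / (2 * norm z)) *\<^sub>R z) 0 < d"
    using d(1) assms by simp_all
  then show False using d(2) by blast
qed

lemma tendsto_scaleR_at_zero:
  fixes f :: "'a::real_normed_vector \<Rightarrow> 'b::topological_space"
  assumes "(f \<longlongrightarrow> l) (at 0)" and "c \<noteq> 0"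
  shows "((\<lambda>x. f (c *\<^sub>R x)) \<longlongrightarrow> l) (at 0)"
proof (rule filterlim_compose[OF assms(1)])
  have "((\<lambda>x::'a. c *\<^sub>R x) \<longlongrightarrow> c *\<^sub>R 0) (at 0)" by (intro tendsto_intros)
  then show "filterlim (\<lambda>x::'a. c *\<^sub>R x) (at 0) (at 0)"
    using assms(2) by (auto simp: filterlim_at eventually_at_filter)
qed

text \<open>The hypothesis \<open>z \<noteq> 0\<close> is needed: on the zero space the limit at \<open>0\<close> is vacuous.\<close>

lemma orlicz_function_zero:
  fixes f :: "'a::banach \<Rightarrow> ereal" and z :: 'a
  assumes orl: "orlicz_function f" and z: "z \<noteq> 0"
  shows "f 0 = 0"
proof -
  have cvx: "ereal_convex f" and lim: "(f \<longlongrightarrow> 0) (at 0)" and "ereal_proper f"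
    using orl unfolding orlicz_function_def by auto
  have bot: "at (0::'a) \<noteq> bot" by (rule at_zero_neq_bot[OF z])
  have "f 0 \<le> f x" for x
    using orl ereal_convex_even_min_zero unfolding orlicz_function_def by blast
  then have "f 0 \<le> 0" by (intro tendsto_lowerbound[OF lim _ bot] always_eventually) simp
  moreover have "f 0 \<noteq> -\<infinity>" using \<open>ereal_proper f\<close> unfolding ereal_proper_def by blast
  ultimately obtain m where m: "f 0 = ereal m" by (cases "f 0") auto
  \<comment> \<open>let \<open>y \<rightarrow> 0\<close> in \<open>f y \<le> (f (2 y) + f 0) / 2\<close>\<close>
  have "f y \<le> ereal (1/2) * f (2 *\<^sub>R y) + ereal (1/2) * f 0" for y
    using ereal_convexD[OF cvx, of "1/2" "2 *\<^sub>R y" 0] by simp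
  moreover have "((\<lambda>y. ereal (1/2) * f (2 *\<^sub>R y) + ereal (1/2) * f 0)
      \<longlongrightarrow> ereal (1/2) * 0 + ereal (1/2) * f 0) (at 0)"
    by (intro tendsto_add_ereal tendsto_cmult_ereal tendsto_scaleR_at_zero[OF lim] tendsto_const)
      (simp_all add: m)
  ultimately have "0 \<le> ereal (1/2) * 0 + ereal (1/2) * f 0"
    by (intro tendsto_le[OF bot _ lim]) auto
  then show ?thesis using \<open>f 0 \<le> 0\<close> m by simp
qed

lemma orlicz_function_nonneg:
  assumes "orlicz_function f" and "f 0 = 0"
  shows "0 \<le> f x"
  using assms ereal_convex_even_min_zero[of f x] unfolding orlicz_function_def by simp

lemma orlicz_function_coercive:
  assumes orl: "orlicz_function f" and f0: "f 0 = 0"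
  shows "\<exists>R>0. \<forall>x. R \<le> norm x \<longrightarrow> ereal (norm x / R) \<le> f x"
proof -
  have cvx: "ereal_convex f" and lim: "(f \<longlongrightarrow> \<infinity>) at_infinity"
    using orl unfolding orlicz_function_def by auto
  obtain b where b: "\<And>x. b \<le> norm x \<Longrightarrow> ereal 1 < f x"
    using lim unfolding tendsto_PInfty eventually_at_infinity by blast
  define R where "R = max b 1"
  have "ereal (norm x / R) \<le> f x" if x: "R \<le> norm x" for x
  proof -
    define t where "t = R / norm x"
    have "0 < R" unfolding R_def by simp
    then have "0 < norm x" using x by linarith
    then have t: "0 < t" "t \<le> 1" "norm (t *\<^sub>R x) = R"
      using x \<open>0 < R\<close> unfolding t_def by (auto simp: divide_le_eq_1)
    have "ereal 1 < f (t *\<^sub>R x)" using b[of "t *\<^sub>R x"] t(3) unfolding R_def by simp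
    also have "\<dots> \<le> ereal t * f x" by (rule ereal_convex_scale_le[OF cvx f0 t(1,2)])
    finally have "ereal 1 < ereal t * f x" .
    then have "ereal (1 / t) \<le> f x" using t(1) by (cases "f x") (auto simp: field_simps)
    then show ?thesis unfolding t_def by simp
  qed
  then show ?thesis unfolding R_def by (intro exI[of _ "max b 1"]) auto
qed

lemma orlicz_function_small_near_zero:
  assumes "orlicz_function f" and "f 0 = 0"
  shows "\<exists>d>0. \<forall>x. norm x < d \<longrightarrow> f x < 1"
proof -
  have "eventually (\<lambda>x. f x < 1) (at 0)"
    using assms(1) unfolding orlicz_function_def by (auto dest: order_tendstoD(2)[of _ 0 _ 1])
  then obtain d where d: "0 < d" "\<And>x. x \<noteq> 0 \<Longrightarrow> dist x 0 < d \<Longrightarrow> f x < 1"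
    unfolding eventually_at by auto
  have "f x < 1" if "norm x < d" for x
    using d(2)[of x] that assms(2) by (cases "x = 0") auto
  then show ?thesis using d(1) by blast
qed

lemma pairing_conjugate_even:
  assumes "ereal_even f" and "\<And>u v. P (- u) v = P u (- v)"
  shows "ereal_even (pairing_conjugate P f)"
proof -
  have le: "pairing_conjugate P f (- v) \<le> pairing_conjugate P f v" for v
    unfolding pairing_conjugate_def[of P f "- v"]
  proof (rule SUP_least)
    fix u
    have "ereal (P u (- v)) - f u = ereal (P (- u) v) - f (- u)"
      using assms unfolding ereal_even_def by simp
    also have "\<dots> \<le> pairing_conjugate P f v" by (rule pairing_conjugate_ge)
    finally show "ereal (P u (- v)) - f u \<le> pairing_conjugate P f v" .
  qed
  show ?thesis unfolding ereal_even_def using le le[of "- _"] by (metis antisym minus_minus)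
qed

lemma pairing_conjugate_nonneg: "f 0 = 0 \<Longrightarrow> P 0 v = 0 \<Longrightarrow> 0 \<le> pairing_conjugate P f v"
  using pairing_conjugate_ge[of P 0 v f] by (simp add: zero_ereal_def)

lemma pairing_conjugate_le_linear:
  assumes R: "0 < R" and f_nonneg: "\<And>u. 0 \<le> f u"
    and coercive: "\<And>u. R \<le> norm u \<Longrightarrow> ereal (norm u / R) \<le> f u"
    and bound: "\<And>u. P u v \<le> norm u * norm v" and v: "norm v \<le> 1 / R"
  shows "pairing_conjugate P f v \<le> ereal (R * norm v)"
proof (rule pairing_conjugate_le)
  show "f u \<noteq> -\<infinity>" for u using f_nonneg[of u] by auto
  fix u s assume s: "f u = ereal s"
  show "P u v - s \<le> R * norm v"
  proof (cases "norm u \<le> R")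
    case True
    then have "P u v \<le> R * norm v" using bound[of u] by (meson mult_right_mono norm_ge_zero order_trans)
    then show ?thesis using f_nonneg[of u] s by simp
  next
    case False
    have "P u v \<le> norm u * (1 / R)" using bound[of u] v by (meson mult_left_mono norm_ge_zero order_trans)
    also have "\<dots> \<le> s" using coercive[of u] False s by simp
    finally have "P u v - s \<le> 0" by simp
    also have "0 \<le> R * norm v" using R by simp
    finally show ?thesis .
  qed
qed

lemma ereal_tendsto_zero_linear_bound:
  fixes g :: "'a::real_normed_vector \<Rightarrow> ereal"
  assumes R: "0 < R" and nonneg: "\<And>v. 0 \<le> g v"
    and bound: "\<And>v. norm v \<le> 1 / R \<Longrightarrow> g v \<le> ereal (R * norm v)"
  shows "(g \<longlongrightarrow> 0) (at 0)"
proof (rule tendsto_sandwich[of "\<lambda>_. 0" g _ "\<lambda>v. ereal (R * norm v)"])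
  show "eventually (\<lambda>v. g v \<le> ereal (R * norm v)) (at 0)"
    unfolding eventually_at using R by (intro exI[of _ "1 / R"]) (auto intro: bound)
  have "((\<lambda>v::'a. norm v) \<longlongrightarrow> 0) (at 0)" using tendsto_norm_zero[OF tendsto_ident_at] .
  then have "((\<lambda>v. ereal (R * norm v)) \<longlongrightarrow> ereal (R * 0)) (at (0::'a))"
    by (intro tendsto_ereal tendsto_mult_left)
  then show "((\<lambda>v. ereal (R * norm v)) \<longlongrightarrow> 0) (at (0::'a))" by (simp add: zero_ereal_def)
qed (simp_all add: nonneg)

lemma ereal_tendsto_infinity_linear_bound:
  fixes g :: "'a::real_normed_vector \<Rightarrow> ereal"
  assumes d: "0 < d" and bound: "\<And>v. ereal (d * norm v - 1) \<le> g v"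
  shows "(g \<longlongrightarrow> \<infinity>) at_infinity"
  unfolding tendsto_PInfty eventually_at_infinity
proof
  fix r :: real
  have "ereal r < g v" if "(r + 2) / d \<le> norm v" for v
  proof -
    have "r + 2 \<le> d * norm v" using that d by (simp add: field_simps)
    then have "ereal r < ereal (d * norm v - 1)" by simp
    then show ?thesis using bound[of v] by (rule less_le_trans)
  qed
  then show "\<exists>b. \<forall>v. b \<le> norm v \<longrightarrow> ereal r < g v" by blast
qed

lemma pairing_conjugate_ge_linear:
  assumes d: "0 < d" and small: "\<And>u. norm u < d \<Longrightarrow> f u < 1" and f_nonneg: "\<And>u. 0 \<le> f u"
    and scale: "\<And>s u. P (s *\<^sub>R u) v = s * P u v"
    and norming: "\<exists>u. norm u \<le> 1 \<and> norm v / 2 \<le> P u v"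
  shows "ereal (d / 4 * norm v - 1) \<le> pairing_conjugate P f v"
proof -
  obtain u where u: "norm u \<le> 1" "norm v / 2 \<le> P u v" using norming by blast
  have "norm ((d / 2) *\<^sub>R u) < d" using u(1) d by (simp add: mult_left_le)
  then obtain s where s: "f ((d / 2) *\<^sub>R u) = ereal s" "s < 1"
    using small f_nonneg by (cases "f ((d / 2) *\<^sub>R u)") fastforce+
  have "d / 2 * (norm v / 2) \<le> d / 2 * P u v" using u(2) d by (intro mult_left_mono) auto
  then have "ereal (d / 4 * norm v - 1) \<le> ereal (P ((d / 2) *\<^sub>R u) v) - f ((d / 2) *\<^sub>R u)"
    using s scale by simp
  also have "\<dots> \<le> pairing_conjugate P f v" by (rule pairing_conjugate_ge)
  finally show ?thesis .
qed

lemma orlicz_pairing_conjugate: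
  fixes f :: "'a::banach \<Rightarrow> ereal" and P :: "'a \<Rightarrow> 'b::real_normed_vector \<Rightarrow> real"
  assumes orl: "orlicz_function f" and f0: "f 0 = 0"
    and scale: "\<And>s u v. P (s *\<^sub>R u) v = s * P u v" and minus: "\<And>u v. P u (- v) = - P u v"
    and bound: "\<And>u v. P u v \<le> norm u * norm v"
    and norming: "\<And>v. \<exists>u. norm u \<le> 1 \<and> norm v / 2 \<le> P u v"
  shows "ereal_even (pairing_conjugate P f) \<and> ereal_proper (pairing_conjugate P f) \<and>
    (pairing_conjugate P f \<longlongrightarrow> 0) (at 0) \<and> (pairing_conjugate P f \<longlongrightarrow> \<infinity>) at_infinity"
proof (intro conjI)
  have f_nonneg: "0 \<le> f u" for u by (rule orlicz_function_nonneg[OF orl f0])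
  have nonneg: "0 \<le> pairing_conjugate P f v" for v
    using pairing_conjugate_nonneg[of f P v] f0 scale[of 0] by simp
  obtain R where R: "0 < R" "\<And>u. R \<le> norm u \<Longrightarrow> ereal (norm u / R) \<le> f u"
    using orlicz_function_coercive[OF orl f0] by blast
  have near_zero: "pairing_conjugate P f v \<le> ereal (R * norm v)" if "norm v \<le> 1 / R" for v
    by (rule pairing_conjugate_le_linear[OF R(1) f_nonneg R(2)]) (simp_all add: bound that)
  show "ereal_even (pairing_conjugate P f)"
    using pairing_conjugate_even[of f P] orl scale[of "-1"] minus
    unfolding orlicz_function_def by simp
  have "pairing_conjugate P f 0 \<le> 0" using near_zero[of 0] R(1) by (simp add: zero_ereal_def)
  then have "pairing_conjugate P f 0 \<noteq> \<infinity>" by auto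
  moreover have "pairing_conjugate P f v \<noteq> -\<infinity>" for v using nonneg[of v] by auto
  ultimately show "ereal_proper (pairing_conjugate P f)" unfolding ereal_proper_def by blast
  show "(pairing_conjugate P f \<longlongrightarrow> 0) (at 0)"
    by (rule ereal_tendsto_zero_linear_bound[OF R(1) nonneg near_zero])
  obtain d where d: "0 < d" "\<And>u. norm u < d \<Longrightarrow> f u < 1"
    using orlicz_function_small_near_zero[OF orl f0] by blast
  have "ereal (d / 4 * norm v - 1) \<le> pairing_conjugate P f v" for v
    by (rule pairing_conjugate_ge_linear[OF d f_nonneg scale norming])
  then show "(pairing_conjugate P f \<longlongrightarrow> \<infinity>) at_infinity"
    using d(1) by (intro ereal_tendsto_infinity_linear_bound[of "d / 4"]) auto
qed

lemma blinfun_apply_le_norm_mult: "blinfun_apply y x \<le> norm (y :: 'a::real_normed_vector \<Rightarrow>\<^sub>L real) * norm x"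
  using norm_blinfun[of y x] by simp

lemma orlicz_function_convex_conjugate:
  fixes \<phi> :: "'a::banach \<Rightarrow> ereal" and z :: 'a
  assumes orl: "orlicz_function \<phi>" and z: "z \<noteq> 0"
  shows "orlicz_function (convex_conjugate \<phi>)"
proof -
  have "ereal_convex (convex_conjugate \<phi>)"
    unfolding convex_conjugate_eq_pairing_conjugate
    by (rule pairing_conjugate_convex, rule bounded_linear.linear[OF blinfun.bounded_linear_left])
  moreover have "ereal_lsc (convex_conjugate \<phi>)"
    unfolding convex_conjugate_eq_pairing_conjugate
    by (rule pairing_conjugate_lsc, rule linear_continuous_on[OF blinfun.bounded_linear_left])
  moreover have "ereal_even (convex_conjugate \<phi>) \<and> ereal_proper (convex_conjugate \<phi>) \<and>
      (convex_conjugate \<phi> \<longlongrightarrow> 0) (at 0) \<and> (convex_conjugate \<phi> \<longlongrightarrow> \<infinity>) at_infinity"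
    unfolding convex_conjugate_eq_pairing_conjugate
  proof (rule orlicz_pairing_conjugate[OF orl orlicz_function_zero[OF orl z] _ _ _
        exists_half_norming_vector])
    show "blinfun_apply y x \<le> norm x * norm y" for x y
      using blinfun_apply_le_norm_mult[of y x] by (simp only: mult.commute)
  qed (simp_all add: blinfun.scaleR_right blinfun.minus_left)
  ultimately show ?thesis unfolding orlicz_function_def by blast
qed

lemma orlicz_function_of_convex_conjugate:
  fixes \<phi> :: "'a::banach \<Rightarrow> ereal" and z :: 'a
  assumes lsc: "ereal_lsc \<phi>" and cvx: "ereal_convex \<phi>" and prp: "ereal_proper \<phi>"
    and orl: "orlicz_function (convex_conjugate \<phi>)" and z: "z \<noteq> 0"
  shows "orlicz_function \<phi>"
proof -
  obtain y :: "'a \<Rightarrow>\<^sub>L real" where "blinfun_apply y z = norm z"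
    using exists_norming_functional by blast
  then have "y \<noteq> 0" using z by auto
  have norming: "\<exists>y. norm y \<le> 1 \<and> norm x / 2 \<le> blinfun_apply y x" for x :: 'a
  proof -
    obtain y :: "'a \<Rightarrow>\<^sub>L real" where "norm y \<le> 1" "blinfun_apply y x = norm x"
      using exists_norming_functional by blast
    then show ?thesis by (intro exI[of _ y]) simp
  qed
  define \<psi> where "\<psi> = pairing_conjugate (\<lambda>y x. blinfun_apply y x) (convex_conjugate \<phi>)"
  have "ereal_even \<psi> \<and> ereal_proper \<psi> \<and> (\<psi> \<longlongrightarrow> 0) (at 0) \<and> (\<psi> \<longlongrightarrow> \<infinity>) at_infinity"
    unfolding \<psi>_def
    by (rule orlicz_pairing_conjugate[OF orl orlicz_function_zero[OF orl \<open>y \<noteq> 0\<close>] _ _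
          blinfun_apply_le_norm_mult norming])
      (simp_all add: blinfun.scaleR_left blinfun.minus_right)
  moreover have "\<psi> = \<phi>" unfolding \<psi>_def by (rule fenchel_moreau[OF lsc cvx prp])
  ultimately show ?thesis unfolding orlicz_function_def using lsc cvx by simp
qed

lemma orlicz_function_trivial_space:
  fixes f :: "'a::banach \<Rightarrow> ereal"
  assumes trivial: "\<And>x::'a. x = 0" and finite: "f 0 \<noteq> \<infinity>" "f 0 \<noteq> -\<infinity>"
  shows "orlicz_function f"
proof -
  obtain a where "f 0 = ereal a" using finite by (cases "f 0") auto
  then have const: "f x = ereal a" for x using trivial[of x] by simp
  have "ereal t * ereal a + ereal (1 - t) * ereal a = ereal a" for t by (simp add: algebra_simps)
  then have "ereal_convex f" unfolding ereal_convex_def by (simp add: const)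
  moreover have "ereal_lsc f" by (rule ereal_lsc_continuous) (simp add: const)
  moreover have "{0::'a} = UNIV" using trivial by blast
  then have "at (0::'a) = bot" by (simp add: at_eq_bot_iff)
  moreover have "(at_infinity :: 'a filter) = bot"
    unfolding eventually_False[symmetric] eventually_at_infinity
  proof (intro exI[of _ 1] allI impI)
    show "1 \<le> norm x \<Longrightarrow> False" for x :: 'a using trivial[of x] by simp
  qed
  ultimately show ?thesis
    unfolding orlicz_function_def ereal_even_def ereal_proper_def by (simp add: const)
qed

lemma orlicz_function_trivial_space_conjugate:
  fixes \<phi> :: "'a::banach \<Rightarrow> ereal"
  assumes trivial: "\<And>x::'a. x = 0" and "ereal_proper \<phi>"
  shows "orlicz_function \<phi> \<and> orlicz_function (convex_conjugate \<phi>)"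
proof
  have dual_trivial: "\<And>y::'a \<Rightarrow>\<^sub>L real. y = 0" by (rule blinfun_eqI) (subst trivial, simp)
  obtain x :: 'a where "\<phi> x \<noteq> \<infinity>" "\<phi> x \<noteq> -\<infinity>" using assms(2) unfolding ereal_proper_def by blast
  then have finite: "\<phi> 0 \<noteq> \<infinity>" "\<phi> 0 \<noteq> -\<infinity>" using trivial[of x] by simp_all
  then show "orlicz_function \<phi>" by (rule orlicz_function_trivial_space[OF trivial])
  have "ereal (blinfun_apply y x) - \<phi> x = - \<phi> 0" for y x using trivial[of x] by (cases "\<phi> 0") simp_all
  then have "convex_conjugate \<phi> y = - \<phi> 0" for y unfolding convex_conjugate_def by simp
  then show "orlicz_function (convex_conjugate \<phi>)"
    using finite by (intro orlicz_function_trivial_space[OF dual_trivial]) (cases "\<phi> 0"; simp)+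
qed

theorem lemma3p2p3:
  fixes \<phi> :: "'a::banach \<Rightarrow> ereal"
  assumes "ereal_lsc \<phi>" and "ereal_convex \<phi>" and "ereal_proper \<phi>"
  shows "orlicz_function \<phi> \<longleftrightarrow> orlicz_function (convex_conjugate \<phi>)"
proof (cases "\<exists>z::'a. z \<noteq> 0")
  case True
  then obtain z :: 'a where "z \<noteq> 0" by blast
  then show ?thesis
    using orlicz_function_convex_conjugate orlicz_function_of_convex_conjugate[OF assms] by blast
next
  case False
  then show ?thesis using orlicz_function_trivial_space_conjugate[OF _ assms(3)] by blast
qed

end
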